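(* Let $r\ge3$ and $d\in\{1,\dots,r-1\}$. Then there is a brick $M\in\mathrm{rep}_{\mathrm{proj}}(K_r,d)$ which is not $(d+1)$-homogeneous.
   Context: $k$ algebraically closed of arbitrary characteristic. For $n\ge1$, $K_n$ is the Kronecker quiver with arrows $\gamma_1,\dots,\gamma_n:1\to2$, $A_n=\bigoplus_ik\gamma_i$. For $M=(M_1,M_2,(M(\gamma_i))_i)\in\mathrm{rep}(K_r)$ let $\psi_M:A_r\otimes M_1\to M_2$, $\gamma_i\otimes m\mapsto M(\gamma_i)(m)$; $M\in\mathrm{rep}_{\mathrm{proj}}(K_r,d)$ means $\psi_M|_{\mathfrak v\otimes M_1}$ is injective for every $d$-dimensional subspace $\mathfrak v\subseteq A_r$. For an injective linear map $\alpha:A_e\to A_r$, $\alpha^*(M)\in\mathrm{rep}(K_e)$ is $(M_1,M_2,(\psi_M(\alpha(\gamma_j)\otimes-))_{j\le e})$. $M$ is $e$-homogeneous ($1\le e\le r$) if $\alpha^*(M)\cong\beta^*(M)$ for all injective linear maps $\alpha,\beta:A_e\to A_r$. A brick is a representation with endomorphism ring $k$. *)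

theory Defs
  imports "Jordan_Normal_Form.Matrix" "HOL-Computational_Algebra.Polynomial"
begin

definition alg_closed :: "'k::field itself \<Rightarrow> bool" where
  "alg_closed _ \<longleftrightarrow> (\<forall>p :: 'k poly. degree p \<ge> 1 \<longrightarrow> (\<exists>x. poly p x = 0))"

text \<open>A finite-dimensional representation of a Kronecker quiver: M_1 = k^(dim1),
  M_2 = k^(dim2), and the arrow gamma_i acts by the matrix arr M i (dim2 x dim1).\<close>
record 'k krep =
  dim1 :: nat
  dim2 :: nat
  arr :: "nat \<Rightarrow> 'k mat"

definition is_rep :: "nat \<Rightarrow> 'k::field krep \<Rightarrow> bool" where
  "is_rep r M \<longleftrightarrow> (\<forall>i<r. arr M i \<in> carrier_mat (dim2 M) (dim1 M))"

text \<open>A linear map A_e -> A_r, given by its r x e matrix w.r.t. the bases gamma; injectivity.\<close>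
definition inj_lin :: "nat \<Rightarrow> nat \<Rightarrow> 'k::field mat \<Rightarrow> bool" where
  "inj_lin r e \<alpha> \<longleftrightarrow> \<alpha> \<in> carrier_mat r e \<and>
     (\<forall>v \<in> carrier_vec e. \<alpha> *\<^sub>v v = 0\<^sub>v r \<longrightarrow> v = 0\<^sub>v e)"

text \<open>Pullback alpha^*(M): arrow gamma_j acts by psi_M(alpha(gamma_j) tensor -)
  = sum_i alpha_(i,j) M(gamma_i).\<close>
definition pullback :: "nat \<Rightarrow> 'k::field mat \<Rightarrow> 'k krep \<Rightarrow> 'k krep" where
  "pullback r \<alpha> M = \<lparr> dim1 = dim1 M, dim2 = dim2 M,
     arr = (\<lambda>j. mat (dim2 M) (dim1 M)
                  (\<lambda>(p, q). \<Sum>i<r. \<alpha> $$ (i, j) * (arr M i $$ (p, q)))) \<rparr>"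

text \<open>psi_M : A_n tensor M_1 -> M_2, with A_n tensor M_1 identified with M_1^n via
  sum_i gamma_i tensor x_i <-> (x_i)_i.\<close>
definition psi :: "nat \<Rightarrow> 'k::field krep \<Rightarrow> (nat \<Rightarrow> 'k vec) \<Rightarrow> 'k vec" where
  "psi n M x = vec (dim2 M) (\<lambda>p. \<Sum>i<n. (arr M i *\<^sub>v x i) $ p)"

text \<open>M in rep_proj(K_r, d): for every d-dimensional subspace v = alpha(A_d) of A_r
  (alpha : A_d -> A_r injective), psi_M is injective on v tensor M_1. Via the isomorphism
  alpha tensor id : A_d tensor M_1 -> v tensor M_1, psi_M restricted to v tensor M_1 is
  psi of alpha^*(M) on A_d tensor M_1.\<close>
definition rep_proj :: "nat \<Rightarrow> nat \<Rightarrow> 'k::field krep \<Rightarrow> bool" where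
  "rep_proj r d M \<longleftrightarrow> (\<forall>\<alpha>. inj_lin r d \<alpha> \<longrightarrow>
     (\<forall>x. (\<forall>j<d. x j \<in> carrier_vec (dim1 M)) \<longrightarrow>
          psi d (pullback r \<alpha> M) x = 0\<^sub>v (dim2 M) \<longrightarrow> (\<forall>j<d. x j = 0\<^sub>v (dim1 M))))"

definition rep_hom :: "nat \<Rightarrow> 'k::field krep \<Rightarrow> 'k krep \<Rightarrow> 'k mat \<Rightarrow> 'k mat \<Rightarrow> bool" where
  "rep_hom n M N f1 f2 \<longleftrightarrow> f1 \<in> carrier_mat (dim1 N) (dim1 M) \<and>
     f2 \<in> carrier_mat (dim2 N) (dim2 M) \<and> (\<forall>i<n. f2 * arr M i = arr N i * f1)"

definition rep_iso :: "nat \<Rightarrow> 'k::field krep \<Rightarrow> 'k krep \<Rightarrow> bool" where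
  "rep_iso n M N \<longleftrightarrow> (\<exists>f1 f2. rep_hom n M N f1 f2 \<and> invertible_mat f1 \<and> invertible_mat f2)"

definition homogeneous :: "nat \<Rightarrow> nat \<Rightarrow> 'k::field krep \<Rightarrow> bool" where
  "homogeneous r e M \<longleftrightarrow> (\<forall>\<alpha> \<beta>. inj_lin r e \<alpha> \<longrightarrow> inj_lin r e \<beta> \<longrightarrow>
     rep_iso e (pullback r \<alpha> M) (pullback r \<beta> M))"

definition brick :: "nat \<Rightarrow> 'k::field krep \<Rightarrow> bool" where
  "brick n M \<longleftrightarrow> dim1 M + dim2 M > 0 \<and>
     (\<forall>f1 f2. rep_hom n M M f1 f2 \<longrightarrow>
        (\<exists>c. f1 = c \<cdot>\<^sub>m 1\<^sub>m (dim1 M) \<and> f2 = c \<cdot>\<^sub>m 1\<^sub>m (dim2 M)))"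

end

theory Submission
  imports Defs "Jordan_Normal_Form.Determinant"
begin

text \<open>The representation \<open>M\<close> is \<open>A\<^sub>r \<otimes> k\<^sup>d\<^sup>+\<^sup>2\<close> divided by the span of
  \<open>x = \<Sum>\<^sub>t\<^sub>\<le>\<^sub>d \<gamma>\<^sub>t \<otimes> e\<^sub>t\<close> and \<open>y = \<Sum>\<^sub>t\<^sub>\<le>\<^sub>d \<gamma>\<^sub>t \<otimes> e\<^sub>t\<^sub>+\<^sub>1\<close>, so that
  \<open>ker \<psi>\<^sub>M = \<langle>x, y\<rangle>\<close>. A homomorphism \<open>(f\<^sub>1, f\<^sub>2)\<close> maps kernels of \<open>\<psi>\<close> to kernels of
  \<open>\<psi>\<close> via \<open>id \<otimes> f\<^sub>1\<close>. For an endomorphism of \<open>M\<close>, comparing the images of \<open>x\<close> and \<open>y\<close>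
  forces \<open>f\<^sub>1\<close> to be scalar, and then \<open>f\<^sub>2\<close> is the same scalar because \<open>\<psi>\<^sub>M\<close> is onto;
  so \<open>M\<close> is a brick. Every nonzero \<open>a x + b y\<close> has tensor rank \<open>d + 1\<close>, hence does not lie
  in \<open>\<v> \<otimes> M\<^sub>1\<close> for a \<open>d\<close>-dimensional \<open>\<v>\<close>: this is \<open>M \<in> rep\<^sub>p\<^sub>r\<^sub>o\<^sub>j(K\<^sub>r, d)\<close>.
  Finally let \<open>\<alpha>\<close> be the standard embedding of \<open>A\<^sub>d\<^sub>+\<^sub>1\<close> and \<open>\<beta>\<close> the one sending
  \<open>\<gamma>\<^sub>0, \<gamma>\<^sub>1, \<gamma>\<^sub>2\<close> to \<open>\<gamma>\<^sub>1, \<gamma>\<^sub>2, \<gamma>\<^sub>0\<close>. An isomorphism \<open>\<alpha>\<^sup>*M \<cong> \<beta>\<^sup>*M\<close> would carry the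
  kernel elements \<open>x, y\<close> of \<open>\<alpha>\<^sup>*M\<close> to kernel elements of \<open>\<beta>\<^sup>*M\<close>, and comparing coefficients
  gives \<open>f\<^sub>1 e\<^sub>1 = 0\<close>.\<close>

section \<open>Matrices and block indices\<close>

lemma index_mult_mat_vec_sum:
  assumes "A \<in> carrier_mat m n" "v \<in> carrier_vec n" "p < m"
  shows "(A *\<^sub>v v) $ p = (\<Sum>q<n. A $$ (p, q) * v $ q)"
  using assms by (auto simp: scalar_prod_def atLeast0LessThan intro!: sum.cong)

lemma eq_smult_one_matI:
  fixes A :: "'a::semiring_1 mat"
  assumes A: "A \<in> carrier_mat n n"
    and unit: "\<And>q. q < n \<Longrightarrow> A *\<^sub>v unit_vec n q = c \<cdot>\<^sub>v unit_vec n q"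
  shows "A = c \<cdot>\<^sub>m 1\<^sub>m n"
proof (rule eq_matI)
  fix p q assume "p < dim_row (c \<cdot>\<^sub>m 1\<^sub>m n)" "q < dim_col (c \<cdot>\<^sub>m 1\<^sub>m n)"
  then have p: "p < n" and q: "q < n" by auto
  have "A $$ (p, q) = (A *\<^sub>v unit_vec n q) $ p" using A p q by simp
  also have "\<dots> = (c \<cdot>\<^sub>m 1\<^sub>m n) $$ (p, q)" using unit[OF q] p q by simp
  finally show "A $$ (p, q) = (c \<cdot>\<^sub>m 1\<^sub>m n) $$ (p, q)" .
qed (use A in auto)

lemma invertible_mat_mult_vec_eq_0:
  fixes A :: "'a::comm_ring_1 mat"
  assumes inv: "invertible_mat A" and A: "A \<in> carrier_mat n n" and v: "v \<in> carrier_vec n"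
    and Av: "A *\<^sub>v v = 0\<^sub>v n"
  shows "v = 0\<^sub>v n"
proof -
  obtain B where AB: "A * B = 1\<^sub>m (dim_row A)" and BA: "B * A = 1\<^sub>m (dim_row B)"
    using inv unfolding invertible_mat_def inverts_mat_def by auto
  have B: "B \<in> carrier_mat n n"
    using A AB BA by (metis carrier_matD carrier_matI index_mult_mat(2,3) index_one_mat(2,3))
  have "v = (B * A) *\<^sub>v v" using BA B v by simp
  also have "\<dots> = B *\<^sub>v 0\<^sub>v n" using A B v Av by simp
  also have "\<dots> = 0\<^sub>v n" using B by (auto intro!: eq_vecI)
  finally show ?thesis .
qed

lemma det_eq_0_if_zero_row:
  fixes A :: "'a::comm_ring_1 mat"
  assumes A: "A \<in> carrier_mat n n" and k: "k < n" and zero: "\<And>j. j < n \<Longrightarrow> A $$ (k, j) = 0"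
  shows "det A = 0"
proof -
  have "A = mat\<^sub>r n n (\<lambda>i. if i = k then 0\<^sub>v n else row A i)"
    using A zero by (auto intro!: eq_matI)
  also have "det \<dots> = 0" by (rule det_row_0[OF k]) (use A in auto)
  finally show ?thesis .
qed

lemma det_mult_eq_0_if_inner_dim_less:
  fixes A :: "'a::comm_ring_1 mat"
  assumes A: "A \<in> carrier_mat n m" and B: "B \<in> carrier_mat m n" and mn: "m < n"
  shows "det (A * B) = 0"
proof -
  define A' where "A' = mat n n (\<lambda>(i, j). if j < m then A $$ (i, j) else 0)"
  define B' where "B' = mat n n (\<lambda>(j, q). if j < m then B $$ (j, q) else 0)"
  have A': "A' \<in> carrier_mat n n" and B': "B' \<in> carrier_mat n n"
    unfolding A'_def B'_def by auto
  have "A * B = A' * B'"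
  proof (rule eq_matI)
    fix i q assume "i < dim_row (A' * B')" "q < dim_col (A' * B')"
    then have i: "i < n" and q: "q < n" using A' B' by auto
    have "(A' * B') $$ (i, q) = (\<Sum>j<n. (if j < m then A $$ (i, j) * B $$ (j, q) else 0))"
      using i q A' B' by (auto simp: scalar_prod_def atLeast0LessThan A'_def B'_def intro!: sum.cong)
    also have "\<dots> = (\<Sum>j<m. A $$ (i, j) * B $$ (j, q))"
      by (rule sum.mono_neutral_cong_right) (use mn in auto)
    also have "\<dots> = (A * B) $$ (i, q)"
      using i q A B by (simp add: scalar_prod_def atLeast0LessThan)
    finally show "(A * B) $$ (i, q) = (A' * B') $$ (i, q)" by simp
  qed (use A B A' B' in auto)
  also have "det (A' * B') = det A' * det B'" by (rule det_mult[OF A' B'])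
  also have "det B' = 0" by (rule det_eq_0_if_zero_row[OF B' mn]) (use mn in \<open>simp add: B'_def\<close>)
  finally show ?thesis by simp
qed

lemma det_upper_triangular_const_diag:
  fixes A :: "'a::comm_ring_1 mat"
  assumes "upper_triangular A" "A \<in> carrier_mat n n" "\<And>i. i < n \<Longrightarrow> A $$ (i, i) = c"
  shows "det A = c ^ n"
proof -
  have "det A = (\<Prod>i = 0..<n. A $$ (i, i))"
    using det_upper_triangular[OF assms(1,2)] assms(2) by (simp add: prod_list_diag_prod)
  also have "\<dots> = (\<Prod>i = 0..<n. c)" using assms(3) by (intro prod.cong) auto
  finally show ?thesis by simp
qed

lemma block_div_mod:
  fixes n :: nat
  assumes "q < n"
  shows "(i * n + q) div n = i" and "(i * n + q) mod n = q"
  using assms by simp_all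

lemma block_index_less:
  fixes n :: nat
  assumes "i < r" "q < n"
  shows "i * n + q < r * n"
proof -
  have "i * n + q < (i + 1) * n" using assms(2) by simp
  also have "\<dots> \<le> r * n" using assms(1) by (intro mult_le_mono1) simp
  finally show ?thesis .
qed

lemma obtain_position:
  fixes p r n :: nat
  assumes "p < r * n - 2"
  obtains i q where "i < r" "q < n" "2 \<le> i * n + q" "p = i * n + q - 2"
proof
  have n: "0 < n" using assms by (cases n) auto
  have pn: "p + 2 = (p + 2) div n * n + (p + 2) mod n" by (rule div_mult_mod_eq[symmetric])
  then show "2 \<le> (p + 2) div n * n + (p + 2) mod n"
    and "p = (p + 2) div n * n + (p + 2) mod n - 2" by linarith+
  show "(p + 2) div n < r" using assms by (intro less_mult_imp_div_less) linarith
  show "(p + 2) mod n < n" using n by simp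
qed

lemma sum_sum_if_eq:
  fixes f :: "nat \<Rightarrow> nat \<Rightarrow> 'a::comm_monoid_add"
  assumes "a < r" "b < n"
  shows "(\<Sum>i<r. \<Sum>q<n. if (i, q) = (a, b) \<and> P then f i q else 0) = (if P then f a b else 0)"
proof -
  have "(\<Sum>q<n. if (i, q) = (a, b) \<and> P then f i q else 0) = (if i = a \<and> P then f a b else 0)" for i
    using assms(2) by (cases "i = a \<and> P") auto
  then show ?thesis using assms(1) by (cases P) simp_all
qed

section \<open>The map \<open>\<psi>\<close>, pullbacks and homomorphisms\<close>

lemma index_psi:
  assumes "\<forall>j<e. arr N j \<in> carrier_mat (dim2 N) (dim1 N)" and "\<forall>j<e. v j \<in> carrier_vec (dim1 N)"
    and "p < dim2 N"
  shows "psi e N v $ p = (\<Sum>j<e. \<Sum>q<dim1 N. arr N j $$ (p, q) * v j $ q)"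
  using assms by (auto simp: psi_def simp del: index_mult_mat_vec intro!: sum.cong index_mult_mat_vec_sum)

lemma dim_psi [simp]: "dim_vec (psi n M w) = dim2 M"
  unfolding psi_def by simp

lemma psi_cong: "(\<And>i. i < n \<Longrightarrow> w i = w' i) \<Longrightarrow> psi n M w = psi n M w'"
  unfolding psi_def by (intro eq_vecI) auto

lemma rep_hom_psi:
  assumes h: "rep_hom e N N' f1 f2"
    and N: "\<forall>j<e. arr N j \<in> carrier_mat (dim2 N) (dim1 N)"
    and N': "\<forall>j<e. arr N' j \<in> carrier_mat (dim2 N') (dim1 N')"
    and v: "\<forall>j<e. v j \<in> carrier_vec (dim1 N)"
  shows "f2 *\<^sub>v psi e N v = psi e N' (\<lambda>j. f1 *\<^sub>v v j)"
proof (rule eq_vecI)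
  have f1: "f1 \<in> carrier_mat (dim1 N') (dim1 N)" and f2: "f2 \<in> carrier_mat (dim2 N') (dim2 N)"
    and comm: "\<forall>j<e. f2 * arr N j = arr N' j * f1"
    using h unfolding rep_hom_def by auto
  fix p assume "p < dim_vec (psi e N' (\<lambda>j. f1 *\<^sub>v v j))"
  then have p: "p < dim2 N'" by simp
  have Nv: "\<forall>j<e. arr N j *\<^sub>v v j \<in> carrier_vec (dim2 N)" using N v by auto
  have "(f2 *\<^sub>v psi e N v) $ p = (\<Sum>p'<dim2 N. f2 $$ (p, p') * psi e N v $ p')"
    by (rule index_mult_mat_vec_sum[OF f2 _ p]) (simp add: carrier_vecI)
  also have "\<dots> = (\<Sum>p'<dim2 N. f2 $$ (p, p') * (\<Sum>j<e. (arr N j *\<^sub>v v j) $ p'))"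
    by (simp add: psi_def)
  also have "\<dots> = (\<Sum>j<e. \<Sum>p'<dim2 N. f2 $$ (p, p') * (arr N j *\<^sub>v v j) $ p')"
    by (simp add: sum_distrib_left sum.swap[of _ "{..<e}"])
  also have "\<dots> = (\<Sum>j<e. (f2 *\<^sub>v (arr N j *\<^sub>v v j)) $ p)"
    using Nv by (intro sum.cong refl index_mult_mat_vec_sum[OF f2 _ p, symmetric]) auto
  also have "\<dots> = (\<Sum>j<e. (arr N' j *\<^sub>v (f1 *\<^sub>v v j)) $ p)"
  proof (intro sum.cong refl arg_cong[where f = "\<lambda>u. u $ p"])
    fix j assume "j \<in> {..<e}"
    then have j: "j < e" by simp
    have "f2 *\<^sub>v (arr N j *\<^sub>v v j) = (f2 * arr N j) *\<^sub>v v j"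
      using j f2 N v by (metis assoc_mult_mat_vec)
    also have "\<dots> = arr N' j *\<^sub>v (f1 *\<^sub>v v j)"
      using j comm N' f1 v by (metis assoc_mult_mat_vec)
    finally show "f2 *\<^sub>v (arr N j *\<^sub>v v j) = arr N' j *\<^sub>v (f1 *\<^sub>v v j)" .
  qed
  also have "\<dots> = psi e N' (\<lambda>j. f1 *\<^sub>v v j) $ p"
    using p by (simp add: psi_def)
  finally show "(f2 *\<^sub>v psi e N v) $ p = psi e N' (\<lambda>j. f1 *\<^sub>v v j) $ p" .
qed (use h in \<open>auto simp: rep_hom_def\<close>)

corollary rep_hom_psi_eq_0:
  assumes h: "rep_hom e N N' f1 f2"
    and "\<forall>j<e. arr N j \<in> carrier_mat (dim2 N) (dim1 N)"
    and "\<forall>j<e. arr N' j \<in> carrier_mat (dim2 N') (dim1 N')"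
    and "\<forall>j<e. v j \<in> carrier_vec (dim1 N)"
    and "psi e N v = 0\<^sub>v (dim2 N)"
  shows "psi e N' (\<lambda>j. f1 *\<^sub>v v j) = 0\<^sub>v (dim2 N')"
proof -
  have "f2 \<in> carrier_mat (dim2 N') (dim2 N)" using h unfolding rep_hom_def by auto
  then have "f2 *\<^sub>v 0\<^sub>v (dim2 N) = 0\<^sub>v (dim2 N')" by (auto intro!: eq_vecI)
  then show ?thesis using rep_hom_psi[OF assms(1-4)] assms(5) by simp
qed

lemma rep_hom_snd_eq_smult:
  assumes h: "rep_hom n M M (c \<cdot>\<^sub>m 1\<^sub>m (dim1 M)) f2"
    and arr: "\<forall>i<n. arr M i \<in> carrier_mat (dim2 M) (dim1 M)"
    and hits: "\<forall>p<dim2 M. \<exists>i<n. \<exists>u \<in> carrier_vec (dim1 M). arr M i *\<^sub>v u = unit_vec (dim2 M) p"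
  shows "f2 = c \<cdot>\<^sub>m 1\<^sub>m (dim2 M)"
proof (rule eq_smult_one_matI)
  show f2: "f2 \<in> carrier_mat (dim2 M) (dim2 M)" using h unfolding rep_hom_def by auto
  fix p assume "p < dim2 M"
  then obtain i u where i: "i < n" and u: "u \<in> carrier_vec (dim1 M)"
    and Au: "arr M i *\<^sub>v u = unit_vec (dim2 M) p"
    using hits by blast
  have A: "arr M i \<in> carrier_mat (dim2 M) (dim1 M)" using arr i by blast
  have "f2 *\<^sub>v unit_vec (dim2 M) p = (f2 * arr M i) *\<^sub>v u"
    using Au A f2 u by (metis assoc_mult_mat_vec)
  also have "\<dots> = (arr M i * (c \<cdot>\<^sub>m 1\<^sub>m (dim1 M))) *\<^sub>v u"
    using h i unfolding rep_hom_def by auto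
  also have "\<dots> = arr M i *\<^sub>v ((c \<cdot>\<^sub>m 1\<^sub>m (dim1 M)) *\<^sub>v u)"
    using A u by (metis assoc_mult_mat_vec one_carrier_mat smult_carrier_mat)
  also have "(c \<cdot>\<^sub>m 1\<^sub>m (dim1 M)) *\<^sub>v u = c \<cdot>\<^sub>v u"
    using u by auto
  also have "arr M i *\<^sub>v (c \<cdot>\<^sub>v u) = c \<cdot>\<^sub>v unit_vec (dim2 M) p"
    using mult_mat_vec[OF A u] Au by simp
  finally show "f2 *\<^sub>v unit_vec (dim2 M) p = c \<cdot>\<^sub>v unit_vec (dim2 M) p" .
qed

lemma dim_pullback [simp]:
  "dim1 (pullback r \<alpha> M) = dim1 M" "dim2 (pullback r \<alpha> M) = dim2 M"
  by (simp_all add: pullback_def)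

text \<open>The map \<open>\<alpha> \<otimes> id\<close> on \<open>A\<^sub>e \<otimes> k\<^sup>n\<close>, on elements written as families of components
  as in \<^const>\<open>psi\<close>.\<close>
definition tensor_id :: "'k::field mat \<Rightarrow> nat \<Rightarrow> nat \<Rightarrow> (nat \<Rightarrow> 'k vec) \<Rightarrow> nat \<Rightarrow> 'k vec" where
  "tensor_id \<alpha> e n v i = vec n (\<lambda>q. \<Sum>j<e. \<alpha> $$ (i, j) * v j $ q)"

lemma psi_pullback:
  assumes M: "is_rep r M" and v: "\<forall>j<e. v j \<in> carrier_vec (dim1 M)"
  shows "psi e (pullback r \<alpha> M) v = psi r M (tensor_id \<alpha> e (dim1 M) v)"
proof (rule eq_vecI)
  have A: "\<forall>i<r. arr M i \<in> carrier_mat (dim2 M) (dim1 M)" using M unfolding is_rep_def by auto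
  fix p assume "p < dim_vec (psi r M (tensor_id \<alpha> e (dim1 M) v))"
  then have p: "p < dim2 M" by simp
  have "psi e (pullback r \<alpha> M) v $ p
      = (\<Sum>j<e. \<Sum>q<dim1 M. (\<Sum>i<r. \<alpha> $$ (i, j) * arr M i $$ (p, q)) * v j $ q)"
    using v p by (subst index_psi) (auto simp: pullback_def intro!: sum.cong)
  also have "\<dots> = (\<Sum>j<e. \<Sum>q<dim1 M. \<Sum>i<r. arr M i $$ (p, q) * (\<alpha> $$ (i, j) * v j $ q))"
    by (simp add: sum_distrib_left sum_distrib_right mult_ac)
  also have "\<dots> = (\<Sum>i<r. \<Sum>q<dim1 M. \<Sum>j<e. arr M i $$ (p, q) * (\<alpha> $$ (i, j) * v j $ q))"
    by (subst sum.swap) (simp add: sum.swap[of _ "{..<e}"])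
  also have "\<dots> = psi r M (tensor_id \<alpha> e (dim1 M) v) $ p"
    using A p by (subst index_psi) (auto simp: tensor_id_def sum_distrib_left intro!: sum.cong)
  finally show "psi e (pullback r \<alpha> M) v $ p = psi r M (tensor_id \<alpha> e (dim1 M) v) $ p" .
qed (simp add: pullback_def)

lemma tensor_id_eq_0_imp:
  assumes inj: "inj_lin r e \<alpha>" and v: "\<forall>j<e. v j \<in> carrier_vec n"
    and zero: "\<forall>i<r. tensor_id \<alpha> e n v i = 0\<^sub>v n"
  shows "\<forall>j<e. v j = 0\<^sub>v n"
proof (intro allI impI eq_vecI)
  fix j q assume j: "j < e" and "q < dim_vec (0\<^sub>v n :: 'a vec)"
  then have q: "q < n" by simp
  have \<alpha>: "\<alpha> \<in> carrier_mat r e" using inj unfolding inj_lin_def by auto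
  define u where "u = vec e (\<lambda>j. v j $ q)"
  have u: "u \<in> carrier_vec e" unfolding u_def by simp
  have "\<alpha> *\<^sub>v u = 0\<^sub>v r"
  proof (rule eq_vecI)
    fix i assume "i < dim_vec (0\<^sub>v r :: 'a vec)"
    then have i: "i < r" by simp
    have "(\<alpha> *\<^sub>v u) $ i = tensor_id \<alpha> e n v i $ q"
      by (subst index_mult_mat_vec_sum[OF \<alpha> u i]) (simp add: tensor_id_def u_def q)
    then show "(\<alpha> *\<^sub>v u) $ i = 0\<^sub>v r $ i" using zero i q by simp
  qed (use \<alpha> in simp)
  then have "u = 0\<^sub>v e" using inj u unfolding inj_lin_def by blast
  then show "v j $ q = 0\<^sub>v n $ q" using j q by (simp add: u_def vec_eq_iff)
qed (use v in auto)

lemma rep_hom_pullback_psi_eq_0: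
  assumes M: "is_rep r M" and h: "rep_hom e (pullback r \<alpha> M) (pullback r \<beta> M) f1 f2"
    and v: "\<forall>j<e. v j \<in> carrier_vec (dim1 M)"
    and zero: "psi r M (tensor_id \<alpha> e (dim1 M) v) = 0\<^sub>v (dim2 M)"
  shows "psi r M (tensor_id \<beta> e (dim1 M) (\<lambda>j. f1 *\<^sub>v v j)) = 0\<^sub>v (dim2 M)"
proof -
  have f1: "f1 \<in> carrier_mat (dim1 M) (dim1 M)" using h unfolding rep_hom_def by simp
  have arr: "\<forall>j<e. arr (pullback r \<gamma> M) j \<in> carrier_mat (dim2 M) (dim1 M)" for \<gamma>
    by (simp add: pullback_def)
  have "psi e (pullback r \<alpha> M) v = 0\<^sub>v (dim2 M)" using zero psi_pullback[OF M v] by simp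
  then have "psi e (pullback r \<beta> M) (\<lambda>j. f1 *\<^sub>v v j) = 0\<^sub>v (dim2 M)"
    using rep_hom_psi_eq_0[OF h] arr v by simp
  then show ?thesis using psi_pullback[OF M] f1 v by simp
qed

definition basis_emb :: "nat \<Rightarrow> nat \<Rightarrow> (nat \<Rightarrow> nat) \<Rightarrow> 'k::field mat" where
  "basis_emb r e \<sigma> = mat r e (\<lambda>(i, j). if i = \<sigma> j then 1 else 0)"

lemma sum_basis_emb_row:
  assumes "inj_on \<sigma> {..<e}" "j0 < e" "\<sigma> j0 < r"
  shows "(\<Sum>j<e. basis_emb r e \<sigma> $$ (\<sigma> j0, j) * f j) = f j0"
proof -
  have "(\<Sum>j<e. basis_emb r e \<sigma> $$ (\<sigma> j0, j) * f j) = (\<Sum>j<e. if j = j0 then f j else 0)"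
    using assms by (intro sum.cong) (auto simp: basis_emb_def dest: inj_onD)
  then show ?thesis using assms(2) by simp
qed

lemma inj_lin_basis_emb:
  assumes inj: "inj_on \<sigma> {..<e}" and \<sigma>: "\<forall>j<e. \<sigma> j < r"
  shows "inj_lin r e (basis_emb r e \<sigma> :: 'k::field mat)"
  unfolding inj_lin_def
proof (intro conjI ballI impI)
  show E: "basis_emb r e \<sigma> \<in> carrier_mat r e" unfolding basis_emb_def by simp
  fix v :: "'k vec" assume v: "v \<in> carrier_vec e" and zero: "basis_emb r e \<sigma> *\<^sub>v v = 0\<^sub>v r"
  show "v = 0\<^sub>v e"
  proof (rule eq_vecI)
    fix j assume "j < dim_vec (0\<^sub>v e :: 'k vec)"
    then have j: "j < e" by simp
    have "(basis_emb r e \<sigma> *\<^sub>v v) $ \<sigma> j = v $ j"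
      using sum_basis_emb_row[OF inj j] \<sigma> j by (subst index_mult_mat_vec_sum[OF E v]) auto
    then show "v $ j = 0\<^sub>v e $ j" using zero \<sigma> j by simp
  qed (use v in auto)
qed

lemma tensor_id_basis_emb_image:
  assumes "inj_on \<sigma> {..<e}" "j < e" "\<sigma> j < r" "v j \<in> carrier_vec n"
  shows "tensor_id (basis_emb r e \<sigma>) e n v (\<sigma> j) = v j"
proof (rule eq_vecI)
  fix q assume "q < dim_vec (v j)"
  then have "q < n" using assms(4) by simp
  then show "tensor_id (basis_emb r e \<sigma>) e n v (\<sigma> j) $ q = v j $ q"
    using sum_basis_emb_row[OF assms(1-3), of "\<lambda>j'. v j' $ q"] by (simp add: tensor_id_def)
qed (use assms(4) in \<open>simp add: tensor_id_def\<close>)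

lemma tensor_id_basis_emb_outside:
  assumes "i < r" "i \<notin> \<sigma> ` {..<e}"
  shows "tensor_id (basis_emb r e \<sigma>) e n v i = 0\<^sub>v n"
  using assms by (auto simp: tensor_id_def basis_emb_def intro!: eq_vecI sum.neutral)

section \<open>The representation\<close>

declare add_2_eq_Suc' [simp del]

definition slot :: "nat \<Rightarrow> nat \<Rightarrow> nat \<times> nat" where
  "slot d p = ((p + 2) div (d + 2), (p + 2) mod (d + 2))"

text \<open>\<open>quot_rep r d\<close> has \<open>M\<^sub>1 = k\<^sup>d\<^sup>+\<^sup>2\<close> with basis \<open>e\<^sub>0, \<dots>, e\<^sub>d\<^sub>+\<^sub>1\<close> and
  \<open>M\<^sub>2 = (A\<^sub>r \<otimes> M\<^sub>1) / \<langle>x, y\<rangle>\<close> for \<open>x = \<Sum>\<^sub>t\<^sub>\<le>\<^sub>d \<gamma>\<^sub>t \<otimes> e\<^sub>t\<close> and \<open>y = \<Sum>\<^sub>t\<^sub>\<le>\<^sub>d \<gamma>\<^sub>t \<otimes> e\<^sub>t\<^sub>+\<^sub>1\<close>,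
  with \<open>\<psi>\<^sub>M\<close> the quotient map. The classes of \<open>\<gamma>\<^sub>i \<otimes> e\<^sub>q\<close> other than \<open>\<gamma>\<^sub>0 \<otimes> e\<^sub>0\<close> and
  \<open>\<gamma>\<^sub>0 \<otimes> e\<^sub>1\<close> form a basis of \<open>M\<^sub>2\<close>, the one at position \<open>p\<close> having \<open>slot d p = (i, q)\<close>;
  the two omitted classes are \<open>-\<Sum>\<^sub>1\<^sub>\<le>\<^sub>t\<^sub>\<le>\<^sub>d \<gamma>\<^sub>t \<otimes> e\<^sub>t\<^sub>+\<^sub>q\<close> for \<open>q < 2\<close>.\<close>
definition quot_arr :: "nat \<Rightarrow> nat \<Rightarrow> nat \<Rightarrow> 'k::field mat" where
  "quot_arr r d i = mat (r * (d + 2) - 2) (d + 2) (\<lambda>(p, q).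
     (if slot d p = (i, q) then 1 else 0) -
     (if i = 0 \<and> q < 2 \<and> (\<exists>t. 1 \<le> t \<and> t \<le> d \<and> slot d p = (t, t + q)) then 1 else 0))"

definition quot_rep :: "nat \<Rightarrow> nat \<Rightarrow> 'k::field krep" where
  "quot_rep r d = \<lparr>dim1 = d + 2, dim2 = r * (d + 2) - 2, arr = quot_arr r d\<rparr>"

text \<open>The components of \<open>a x + b y\<close>.\<close>
definition ker_elem :: "nat \<Rightarrow> 'k::field \<Rightarrow> 'k \<Rightarrow> nat \<Rightarrow> 'k vec" where
  "ker_elem d a b i =
     vec (d + 2) (\<lambda>q. if i \<le> d \<and> q = i then a else if i \<le> d \<and> q = i + 1 then b else 0)"

lemma quot_rep_simps [simp]:
  "dim1 (quot_rep r d) = d + 2" "dim2 (quot_rep r d) = r * (d + 2) - 2"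
  "arr (quot_rep r d) = quot_arr r d"
  by (simp_all add: quot_rep_def)

lemma quot_arr_carrier: "quot_arr r d i \<in> carrier_mat (r * (d + 2) - 2) (d + 2)"
  by (simp add: quot_arr_def)

lemma quot_rep_arr_carrier:
  "\<forall>i<n. arr (quot_rep r d) i \<in> carrier_mat (dim2 (quot_rep r d)) (dim1 (quot_rep r d))"
  unfolding quot_rep_simps using quot_arr_carrier by blast

lemma is_rep_quot_rep: "is_rep r (quot_rep r d)"
  unfolding is_rep_def using quot_rep_arr_carrier by blast

lemma ker_elem_carrier [simp]: "ker_elem d a b i \<in> carrier_vec (d + 2)"
  and dim_ker_elem [simp]: "dim_vec (ker_elem d a b i) = d + 2"
  by (simp_all add: ker_elem_def)

lemma index_ker_elem [simp]:
  "q < d + 2 \<Longrightarrow>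
     ker_elem d a b i $ q = (if i \<le> d \<and> q = i then a else if i \<le> d \<and> q = i + 1 then b else 0)"
  by (simp add: ker_elem_def)

lemma ker_elem_fst: "t \<le> d \<Longrightarrow> ker_elem d a 0 t = a \<cdot>\<^sub>v unit_vec (d + 2) t"
  and ker_elem_snd: "t \<le> d \<Longrightarrow> ker_elem d 0 b t = b \<cdot>\<^sub>v unit_vec (d + 2) (t + 1)"
  and ker_elem_beyond: "d < t \<Longrightarrow> ker_elem d a b t = 0\<^sub>v (d + 2)"
  and ker_elem_0_0: "ker_elem d 0 0 t = 0\<^sub>v (d + 2)"
  by (auto simp: ker_elem_def)

lemma slot_position:
  assumes "q < d + 2" "2 \<le> i * (d + 2) + q"
  shows "slot d (i * (d + 2) + q - 2) = (i, q)"
  unfolding slot_def le_add_diff_inverse2[OF assms(2)] block_div_mod[OF assms(1)] ..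

lemma position_less:
  fixes i q r d :: nat
  assumes "i < r" "q < d + 2" "2 \<le> i * (d + 2) + q"
  shows "i * (d + 2) + q - 2 < r * (d + 2) - 2"
  using diff_less_mono[OF block_index_less[OF assms(1,2)] assms(3)] .

lemma index_psi_quot_rep:
  fixes w :: "nat \<Rightarrow> 'k::field vec"
  assumes w: "\<forall>i<r. w i \<in> carrier_vec (d + 2)"
    and i: "i < r" and q: "q < d + 2" and pos: "2 \<le> i * (d + 2) + q"
  shows "psi r (quot_rep r d) w $ (i * (d + 2) + q - 2)
    = w i $ q - (if 1 \<le> i \<and> i \<le> d \<and> i \<le> q \<and> q \<le> i + 1 then w 0 $ (q - i) else 0)"
proof -
  define p where "p = i * (d + 2) + q - 2"
  have slot: "slot d p = (i, q)" unfolding p_def by (rule slot_position[OF q pos])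
  have p: "p < r * (d + 2) - 2" unfolding p_def by (rule position_less[OF i q pos])
  let ?C = "1 \<le> i \<and> i \<le> d \<and> i \<le> q \<and> q \<le> i + 1"
  have "psi r (quot_rep r d) w $ p
      = (\<Sum>j<r. \<Sum>q<dim1 (quot_rep r d :: 'k krep). arr (quot_rep r d) j $$ (p, q) * w j $ q)"
    by (rule index_psi[OF quot_rep_arr_carrier]) (use w p in simp_all)
  also have "\<dots> = (\<Sum>i'<r. \<Sum>q'<d + 2.
      (if (i', q') = (i, q) \<and> True then w i' $ q' else 0)
      - (if (i', q') = (0, q - i) \<and> ?C then w i' $ q' else 0))"
    using p slot by (intro sum.cong refl) (auto simp: quot_arr_def)
  also have "\<dots> = w i $ q - (if ?C then w 0 $ (q - i) else 0)"
    using i q by (simp only: sum_subtractf sum_sum_if_eq) simp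
  finally show ?thesis unfolding p_def .
qed

lemma psi_quot_rep_eq_0_iff:
  fixes w :: "nat \<Rightarrow> 'k::field vec"
  assumes w: "\<forall>i<r. w i \<in> carrier_vec (d + 2)"
  shows "psi r (quot_rep r d) w = 0\<^sub>v (r * (d + 2) - 2) \<longleftrightarrow> (\<exists>a b. \<forall>i<r. w i = ker_elem d a b i)"
proof
  assume zero: "psi r (quot_rep r d) w = 0\<^sub>v (r * (d + 2) - 2)"
  have "w i = ker_elem d (w 0 $ 0) (w 0 $ 1) i" if i: "i < r" for i
  proof (rule eq_vecI)
    fix q assume "q < dim_vec (ker_elem d (w 0 $ 0) (w 0 $ 1) i)"
    then have q: "q < d + 2" by simp
    show "w i $ q = ker_elem d (w 0 $ 0) (w 0 $ 1) i $ q"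
    proof (cases "2 \<le> i * (d + 2) + q")
      case True
      have "psi r (quot_rep r d) w $ (i * (d + 2) + q - 2) = 0"
        using zero position_less[OF i q True] by simp
      then show ?thesis using index_psi_quot_rep[OF w i q True] q True
        by (cases "i = 0") (auto split: if_splits)
    next
      case False
      then have i0: "i = 0" by (cases i) auto
      with False have "q < 2" by simp
      with i0 show ?thesis by (cases q) auto
    qed
  qed (use w i in simp)
  then show "\<exists>a b. \<forall>i<r. w i = ker_elem d a b i" by blast
next
  assume "\<exists>a b. \<forall>i<r. w i = ker_elem d a b i"
  then obtain a b where ab: "\<forall>i<r. w i = ker_elem d a b i" by blast
  show "psi r (quot_rep r d) w = 0\<^sub>v (r * (d + 2) - 2)"
  proof (rule eq_vecI)
    fix p assume "p < dim_vec (0\<^sub>v (r * (d + 2) - 2) :: 'k vec)"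
    then obtain i q where i: "i < r" and q: "q < d + 2" and pos: "2 \<le> i * (d + 2) + q"
      and p: "p = i * (d + 2) + q - 2"
      using obtain_position by (metis index_zero_vec(2))
    then show "psi r (quot_rep r d) w $ p = 0\<^sub>v (r * (d + 2) - 2) $ p"
      using index_psi_quot_rep[OF w i q pos] ab position_less[OF i q pos]
      by (cases "i = 0") auto
  qed simp
qed

lemma slot_eq_imp: "slot d p = (i, q) \<Longrightarrow> p + 2 = i * (d + 2) + q"
  unfolding slot_def using div_mult_mod_eq[of "p + 2" "d + 2"] by auto

lemma quot_arr_mult_unit_vec:
  assumes i: "i < r" and q: "q < d + 2" and pos: "2 \<le> i * (d + 2) + q"
  shows "quot_arr r d i *\<^sub>v unit_vec (d + 2) q = unit_vec (r * (d + 2) - 2) (i * (d + 2) + q - 2)"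
proof (rule eq_vecI)
  have pi: "i * (d + 2) + q - 2 < r * (d + 2) - 2" by (rule position_less[OF i q pos])
  fix p assume "p < dim_vec (unit_vec (r * (d + 2) - 2) (i * (d + 2) + q - 2) :: 'a vec)"
  then have p: "p < r * (d + 2) - 2" by simp
  have "slot d p = (i, q) \<longleftrightarrow> p = i * (d + 2) + q - 2"
    using slot_eq_imp[of d p i q] slot_position[OF q pos] by auto
  moreover have "\<not> (i = 0 \<and> q < 2)" using pos by auto
  ultimately show "(quot_arr r d i *\<^sub>v unit_vec (d + 2) q) $ p
      = unit_vec (r * (d + 2) - 2) (i * (d + 2) + q - 2) $ p"
    using p q pi by (auto simp: quot_arr_def)
qed (simp add: quot_arr_def)

lemma quot_rep_hits_unit_vecs:
  fixes r d :: nat and M :: "'k::field krep"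
  defines "M \<equiv> quot_rep r d"
  shows "\<forall>p<dim2 M. \<exists>i<r. \<exists>u \<in> carrier_vec (dim1 M). arr M i *\<^sub>v u = unit_vec (dim2 M) p"
  unfolding M_def
proof (intro allI impI)
  fix p assume "p < dim2 (quot_rep r d :: 'k krep)"
  then obtain i q where i: "i < r" and q: "q < d + 2" and pos: "2 \<le> i * (d + 2) + q"
    and p: "p = i * (d + 2) + q - 2"
    using obtain_position by (metis quot_rep_simps(2))
  have "quot_arr r d i *\<^sub>v unit_vec (d + 2) q = (unit_vec (r * (d + 2) - 2) p :: 'k vec)"
    unfolding p by (rule quot_arr_mult_unit_vec[OF i q pos])
  then show "\<exists>i<r. \<exists>u \<in> carrier_vec (dim1 (quot_rep r d :: 'k krep)).
      arr (quot_rep r d :: 'k krep) i *\<^sub>v u = unit_vec (dim2 (quot_rep r d :: 'k krep)) p"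
    unfolding quot_rep_simps using i by (intro exI[of _ i] conjI bexI[of _ "unit_vec (d + 2) q"]) simp_all
qed

lemma psi_quot_rep_ker_elem: "psi r (quot_rep r d) (ker_elem d a b) = 0\<^sub>v (r * (d + 2) - 2)"
  using psi_quot_rep_eq_0_iff[of r "ker_elem d a b" d] ker_elem_carrier by blast

lemma rep_hom_quot_rep_ker_elem:
  fixes f1 f2 :: "'k::field mat"
  assumes h: "rep_hom r (quot_rep r d) (quot_rep r d) f1 f2"
  shows "\<exists>a b. \<forall>i<r. f1 *\<^sub>v ker_elem d a0 b0 i = ker_elem d a b i"
proof -
  have f1: "f1 \<in> carrier_mat (d + 2) (d + 2)" using h unfolding rep_hom_def by simp
  then have w: "\<forall>i<r. f1 *\<^sub>v ker_elem d a0 b0 i \<in> carrier_vec (d + 2)"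
    using ker_elem_carrier by (metis mult_mat_vec_carrier)
  have "psi r (quot_rep r d) (\<lambda>i. f1 *\<^sub>v ker_elem d a0 b0 i) = 0\<^sub>v (r * (d + 2) - 2)"
    using rep_hom_psi_eq_0[OF h quot_rep_arr_carrier quot_rep_arr_carrier _] psi_quot_rep_ker_elem
    by (metis ker_elem_carrier quot_rep_simps(1,2))
  then show ?thesis unfolding psi_quot_rep_eq_0_iff[OF w] .
qed

lemma rep_hom_quot_rep_fst_eq_smult:
  fixes f1 f2 :: "'k::field mat"
  assumes d: "1 \<le> d" "d < r" and h: "rep_hom r (quot_rep r d) (quot_rep r d) f1 f2"
  shows "\<exists>a. f1 = a \<cdot>\<^sub>m 1\<^sub>m (d + 2)"
proof -
  have f1: "f1 \<in> carrier_mat (d + 2) (d + 2)" using h unfolding rep_hom_def by simp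
  note maps_ker = rep_hom_quot_rep_ker_elem[OF h]
  obtain a b where x: "\<forall>i<r. f1 *\<^sub>v ker_elem d 1 0 i = ker_elem d a b i"
    using maps_ker by blast
  obtain c c' where y: "\<forall>i<r. f1 *\<^sub>v ker_elem d 0 1 i = ker_elem d c c' i"
    using maps_ker by blast
  have "ker_elem d 1 0 1 = (ker_elem d 0 1 0 :: 'k vec)"
    using d by (intro eq_vecI) auto
  then have e1: "ker_elem d a b 1 = ker_elem d c c' 0"
    using x[rule_format, of 1] y[rule_format, of 0] d by simp
  have "b = 0" "c = 0" "c' = a"
    using d arg_cong[OF e1, of "\<lambda>v. v $ 2"] arg_cong[OF e1, of "\<lambda>v. v $ 0"]
      arg_cong[OF e1, of "\<lambda>v. v $ 1"] by simp_all
  have "f1 *\<^sub>v unit_vec (d + 2) t = a \<cdot>\<^sub>v unit_vec (d + 2) t" if t: "t < d + 2" for t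
  proof (cases "t \<le> d")
    case True
    have "f1 *\<^sub>v unit_vec (d + 2) t = f1 *\<^sub>v ker_elem d 1 0 t"
      using ker_elem_fst[OF True, of "1::'k"] by simp
    also have "\<dots> = ker_elem d a 0 t" using x True d \<open>b = 0\<close> by simp
    finally show ?thesis using ker_elem_fst[OF True, of a] by simp
  next
    case False
    then have t: "t = d + 1" using t by simp
    have "f1 *\<^sub>v unit_vec (d + 2) t = f1 *\<^sub>v ker_elem d 0 1 d"
      using ker_elem_snd[of d d "1::'k"] t by simp
    also have "\<dots> = ker_elem d 0 a d" using y d \<open>c = 0\<close> \<open>c' = a\<close> by simp
    finally show ?thesis using ker_elem_snd[of d d a] t by simp
  qed
  then show ?thesis using eq_smult_one_matI[OF f1] by blast
qed

lemma brick_quot_rep: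
  assumes "1 \<le> d" "d < r"
  shows "brick r (quot_rep r d :: 'k::field krep)"
  unfolding brick_def
proof (intro conjI allI impI)
  fix f1 f2 :: "'k mat" assume h: "rep_hom r (quot_rep r d) (quot_rep r d) f1 f2"
  obtain a where f1: "f1 = a \<cdot>\<^sub>m 1\<^sub>m (d + 2)"
    using rep_hom_quot_rep_fst_eq_smult[OF assms h] by blast
  have "f2 = a \<cdot>\<^sub>m 1\<^sub>m (dim2 (quot_rep r d :: 'k krep))"
    using h f1 quot_rep_arr_carrier quot_rep_hits_unit_vecs
    by (intro rep_hom_snd_eq_smult) simp_all
  then show "\<exists>c. f1 = c \<cdot>\<^sub>m 1\<^sub>m (dim1 (quot_rep r d :: 'k krep))
      \<and> f2 = c \<cdot>\<^sub>m 1\<^sub>m (dim2 (quot_rep r d :: 'k krep))"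
    using f1 by auto
qed simp

lemma tensor_id_eq_ker_elem_imp_zero:
  fixes \<alpha> :: "'k::field mat"
  assumes \<alpha>: "\<alpha> \<in> carrier_mat r d" and dr: "d < r" and x: "\<forall>j<d. x j \<in> carrier_vec (d + 2)"
    and eq: "\<forall>i<r. tensor_id \<alpha> d (d + 2) x i = ker_elem d a b i"
  shows "a = 0 \<and> b = 0"
proof (rule ccontr)
  assume nz: "\<not> (a = 0 \<and> b = 0)"
  \<comment> \<open>the square minor of \<open>a x + b y\<close> in the columns \<open>s, \<dots>, s + d\<close> is triangular with
    diagonal \<open>c \<noteq> 0\<close>, but it factors through \<open>k\<^sup>d\<close>\<close>
  define s :: nat where "s = (if a \<noteq> 0 then 0 else 1)"
  define c where "c = (if a \<noteq> 0 then a else b)"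
  define D where "D = mat (d + 1) (d + 1) (\<lambda>(i, q). ker_elem d a b i $ (q + s))"
  have D: "D \<in> carrier_mat (d + 1) (d + 1)" unfolding D_def by simp
  define P where "P = mat (d + 1) d (\<lambda>(i, j). \<alpha> $$ (i, j))"
  define Q where "Q = mat d (d + 1) (\<lambda>(j, q). x j $ (q + s))"
  have "D = P * Q"
  proof (rule eq_matI)
    fix i q assume "i < dim_row (P * Q)" "q < dim_col (P * Q)"
    then have i: "i < d + 1" and q: "q < d + 1" by (auto simp: P_def Q_def)
    have "(P * Q) $$ (i, q) = (\<Sum>j<d. \<alpha> $$ (i, j) * x j $ (q + s))"
      using i q by (auto simp: P_def Q_def scalar_prod_def atLeast0LessThan intro!: sum.cong)
    also have "\<dots> = tensor_id \<alpha> d (d + 2) x i $ (q + s)"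
      using q by (simp add: tensor_id_def s_def)
    also have "\<dots> = D $$ (i, q)"
      using eq i q dr by (simp add: D_def)
    finally show "D $$ (i, q) = (P * Q) $$ (i, q)" by simp
  qed (auto simp: D_def P_def Q_def)
  then have "det D = 0"
    using det_mult_eq_0_if_inner_dim_less[of P "d + 1" d Q] by (simp add: P_def Q_def)
  moreover have "det D = c ^ (d + 1)"
  proof (rule det_upper_triangular_const_diag[OF _ D])
    show "upper_triangular D" unfolding upper_triangular_def D_def s_def by auto
  qed (auto simp: D_def s_def c_def)
  moreover have "c \<noteq> 0" using nz by (simp add: c_def)
  ultimately show False by simp
qed

lemma rep_proj_quot_rep:
  assumes "d < r"
  shows "rep_proj r d (quot_rep r d :: 'k::field krep)"
  unfolding rep_proj_def
proof (intro allI impI)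
  fix \<alpha> :: "'k mat" and x :: "nat \<Rightarrow> 'k vec" and j
  assume inj: "inj_lin r d \<alpha>" and x: "\<forall>j<d. x j \<in> carrier_vec (dim1 (quot_rep r d :: 'k krep))"
    and zero: "psi d (pullback r \<alpha> (quot_rep r d)) x = 0\<^sub>v (dim2 (quot_rep r d :: 'k krep))"
    and j: "j < d"
  have \<alpha>: "\<alpha> \<in> carrier_mat r d" using inj unfolding inj_lin_def by blast
  have w: "\<forall>i<r. tensor_id \<alpha> d (d + 2) x i \<in> carrier_vec (d + 2)"
    by (simp add: tensor_id_def)
  have "psi r (quot_rep r d) (tensor_id \<alpha> d (d + 2) x) = 0\<^sub>v (r * (d + 2) - 2)"
    using zero psi_pullback[OF is_rep_quot_rep x] unfolding quot_rep_simps by metis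
  then obtain a b where ab: "\<forall>i<r. tensor_id \<alpha> d (d + 2) x i = ker_elem d a b i"
    unfolding psi_quot_rep_eq_0_iff[OF w] by blast
  moreover have "a = 0 \<and> b = 0"
    using tensor_id_eq_ker_elem_imp_zero[OF \<alpha> assms _ ab] x by simp
  ultimately have "\<forall>i<r. tensor_id \<alpha> d (d + 2) x i = 0\<^sub>v (d + 2)"
    by (simp add: ker_elem_0_0)
  then show "x j = 0\<^sub>v (dim1 (quot_rep r d :: 'k krep))"
    using tensor_id_eq_0_imp[OF inj] x j by simp
qed

lemma rep_hom_pullback_quot_rep_ker_elem:
  fixes f1 f2 :: "'k::field mat"
  assumes h: "rep_hom e (pullback r (basis_emb r e id) (quot_rep r d))
      (pullback r (basis_emb r e \<sigma>) (quot_rep r d)) f1 f2"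
    and de: "d < e" "e \<le> r" and inj: "inj_on \<sigma> {..<e}" and \<sigma>: "\<And>j. j < e \<Longrightarrow> \<sigma> j < r"
  shows "\<exists>A B. \<forall>j<e. f1 *\<^sub>v ker_elem d a b j = ker_elem d A B (\<sigma> j)"
proof -
  let ?M = "quot_rep r d :: 'k krep"
  have f1: "f1 \<in> carrier_mat (d + 2) (d + 2)" using h unfolding rep_hom_def by simp
  have "tensor_id (basis_emb r e id) e (d + 2) (ker_elem d a b) i = ker_elem d a b i"
    if i: "i < r" for i
  proof (cases "i < e")
    case True
    then show ?thesis
      using tensor_id_basis_emb_image[of id e i r "ker_elem d a b" "d + 2"] i by simp
  next
    case False
    then show ?thesis
      using tensor_id_basis_emb_outside[OF i, of id e "d + 2" "ker_elem d a b"]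
        ker_elem_beyond[of d i a b] de by simp
  qed
  then have "psi r ?M (tensor_id (basis_emb r e id) e (d + 2) (ker_elem d a b)) = 0\<^sub>v (r * (d + 2) - 2)"
    using psi_quot_rep_ker_elem[of r d a b] by (metis psi_cong)
  then have "psi r ?M (tensor_id (basis_emb r e \<sigma>) e (d + 2) (\<lambda>j. f1 *\<^sub>v ker_elem d a b j))
      = 0\<^sub>v (r * (d + 2) - 2)"
    using rep_hom_pullback_psi_eq_0[OF is_rep_quot_rep h] by simp
  moreover have w: "\<forall>i<r. tensor_id (basis_emb r e \<sigma>) e (d + 2) (\<lambda>j. f1 *\<^sub>v ker_elem d a b j) i
      \<in> carrier_vec (d + 2)"
    by (simp add: tensor_id_def)
  ultimately obtain A B where AB: "\<forall>i<r.
      tensor_id (basis_emb r e \<sigma>) e (d + 2) (\<lambda>j. f1 *\<^sub>v ker_elem d a b j) i = ker_elem d A B i"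
    unfolding psi_quot_rep_eq_0_iff[OF w] by blast
  have "f1 *\<^sub>v ker_elem d a b j = ker_elem d A B (\<sigma> j)" if j: "j < e" for j
    using tensor_id_basis_emb_image[of \<sigma> e j r "\<lambda>j. f1 *\<^sub>v ker_elem d a b j" "d + 2"]
      inj AB \<sigma>[OF j] j f1 by simp
  then show ?thesis by blast
qed

text \<open>On \<open>{0..d}\<close> this is the shift \<open>0 \<mapsto> 1, 1 \<mapsto> 2\<close> for \<open>d = 1\<close> and a permutation for
  \<open>d \<ge> 2\<close>, so one embedding serves all \<open>r \<ge> d + 1\<close>.\<close>
definition cycle012 :: "nat \<Rightarrow> nat" where
  "cycle012 j = (if j = 0 then 1 else if j = 1 then 2 else if j = 2 then 0 else j)"

lemma inj_cycle012: "inj cycle012"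
  unfolding inj_def cycle012_def by auto

lemma not_homogeneous_quot_rep:
  assumes r: "3 \<le> r" and d: "1 \<le> d" "d < r"
  shows "\<not> homogeneous r (d + 1) (quot_rep r d :: 'k::field krep)"
proof
  let ?M = "quot_rep r d :: 'k krep"
  let ?\<alpha> = "basis_emb r (d + 1) id :: 'k mat" and ?\<beta> = "basis_emb r (d + 1) cycle012 :: 'k mat"
  assume hom: "homogeneous r (d + 1) ?M"
  have cyc: "cycle012 j < r" if "j < d + 1" for j
    using that r d by (auto simp: cycle012_def)
  have "inj_lin r (d + 1) ?\<alpha>" using d by (intro inj_lin_basis_emb) auto
  moreover have "inj_lin r (d + 1) ?\<beta>"
    using cyc by (intro inj_lin_basis_emb inj_on_subset[OF inj_cycle012]) auto
  ultimately obtain f1 f2 where h: "rep_hom (d + 1) (pullback r ?\<alpha> ?M) (pullback r ?\<beta> ?M) f1 f2"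
    and inv: "invertible_mat f1"
    using hom unfolding homogeneous_def rep_iso_def by blast
  have f1: "f1 \<in> carrier_mat (d + 2) (d + 2)" using h unfolding rep_hom_def by simp
  have maps_ker: "\<exists>A B. \<forall>j<d + 1. f1 *\<^sub>v ker_elem d a b j = ker_elem d A B (cycle012 j)" for a b
    using inj_on_subset[OF inj_cycle012 subset_UNIV] cyc d
    by (intro rep_hom_pullback_quot_rep_ker_elem[OF h]) auto
  obtain A B where x: "\<forall>j<d + 1. f1 *\<^sub>v ker_elem d 1 0 j = ker_elem d A B (cycle012 j)"
    using maps_ker by blast
  obtain C D where y: "\<forall>j<d + 1. f1 *\<^sub>v ker_elem d 0 1 j = ker_elem d C D (cycle012 j)"
    using maps_ker by blast
  have "ker_elem d A B 2 = 0\<^sub>v (d + 2)"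
  proof (cases "d = 1")
    case True
    then show ?thesis by (simp add: ker_elem_beyond)
  next
    case False
    then have d2: "2 \<le> d" using d by simp
    have e1: "ker_elem d 1 0 1 = (ker_elem d 0 1 0 :: 'k vec)"
      and e2: "ker_elem d 1 0 2 = (ker_elem d 0 1 1 :: 'k vec)"
      using d2 by (auto intro!: eq_vecI)
    have "ker_elem d A B 2 = f1 *\<^sub>v ker_elem d 1 0 1" using x d2 by (simp add: cycle012_def)
    also have "\<dots> = ker_elem d C D 1" using y e1 by (simp add: cycle012_def)
    finally have AB2: "ker_elem d A B 2 = ker_elem d C D 1" .
    have "ker_elem d A B 0 = f1 *\<^sub>v ker_elem d 1 0 2" using x d2 by (simp add: cycle012_def)
    also have "\<dots> = ker_elem d C D 2" using y e2 d2 by (simp add: cycle012_def)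
    finally have AB0: "ker_elem d A B 0 = ker_elem d C D 2" .
    have "B = 0" "A = 0"
      using d2 arg_cong[OF AB2, of "\<lambda>v. v $ 3"] arg_cong[OF AB0, of "\<lambda>v. v $ 0"] by simp_all
    then show ?thesis by (simp add: ker_elem_0_0)
  qed
  then have "f1 *\<^sub>v unit_vec (d + 2) 1 = 0\<^sub>v (d + 2)"
    using x[rule_format, of 1] d ker_elem_fst[of 1 d "1::'k"] by (simp add: cycle012_def)
  then have "unit_vec (d + 2) 1 = (0\<^sub>v (d + 2) :: 'k vec)"
    by (rule invertible_mat_mult_vec_eq_0[OF inv f1 unit_vec_carrier])
  then show False using unit_vec_nonzero[of 1 "d + 2"] by simp
qed

theorem proposition5p2p1:
  fixes r d :: nat
  assumes "alg_closed TYPE('k::field)"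
    and "r \<ge> 3" and "1 \<le> d" and "d \<le> r - 1"
  shows "\<exists>M :: 'k krep. is_rep r M \<and> brick r M \<and> rep_proj r d M \<and> \<not> homogeneous r (d + 1) M"
proof -
  have "d < r" using assms by simp
  then show ?thesis
    using is_rep_quot_rep brick_quot_rep rep_proj_quot_rep not_homogeneous_quot_rep assms by blast
qed

end
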